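(* The optimal value of problem (P4) (the mixed-autonomy system) is no less than the optimal value of problem (P4) with the additional constraint $z_i=0$ for all $i$ (the human-only system).
   Context: Model: $n$ locations; $\theta_i>0$; $\alpha_{ij}\ge0$ with $\alpha_{ii}=0$, $\sum_j\alpha_{ij}=1$, and the directed graph with adjacency matrix $[\alpha_{ij}]$ strongly connected; $\beta\in(0,1)$; $\omega>0$; $s\ge0$; $F$ a continuous cumulative distribution function with support $[0,\bar p]$. Problem (P4): maximize over $\{p_i,\delta_i,x_i,y_{ij},z_i,r_{ij}\}$ the objective $\sum_i p_i\theta_i(1-F(p_i))-\omega\sum_i\delta_i-s\sum_i z_i$ subject to, for all $i$: $d_i=\theta_i(1-F(p_i))$; $x_i=\beta\big[\sum_j\alpha_{ji}\min\{x_j,d_j\}+\sum_j y_{ji}\big]+\delta_i$; $\sum_j y_{ij}=\max\{x_i-d_i,0\}$; $z_i=\sum_j\alpha_{ji}\max\{d_j-x_j,0\}+\sum_j r_{ji}$; $\sum_j r_{ij}=z_i-\max\{d_i-x_i,0\}$; all variables nonnegative. *)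

theory Defs
  imports "HOL-Analysis.Analysis"
begin

text \<open>Locations are the elements of a finite type 'n.
  A decision vector of problem (P4) is a tuple (p, delta, x, y, z, r).\<close>

type_synonym 'n decision =
  "('n \<Rightarrow> real) \<times> ('n \<Rightarrow> real) \<times> ('n \<Rightarrow> real) \<times> ('n \<Rightarrow> 'n \<Rightarrow> real)
   \<times> ('n \<Rightarrow> real) \<times> ('n \<Rightarrow> 'n \<Rightarrow> real)"

definition continuous_cdf_support :: "(real \<Rightarrow> real) \<Rightarrow> real \<Rightarrow> bool" where
  "continuous_cdf_support F pbar \<longleftrightarrow>
     continuous_on UNIV F \<and> mono F \<and>
     (\<forall>t\<le>0. F t = 0) \<and> (\<forall>t\<ge>pbar. F t = 1) \<and>
     (\<forall>s t. 0 \<le> s \<longrightarrow> s < t \<longrightarrow> t \<le> pbar \<longrightarrow> F s < F t)"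

definition routing_matrix :: "('n::finite \<Rightarrow> 'n \<Rightarrow> real) \<Rightarrow> bool" where
  "routing_matrix \<alpha> \<longleftrightarrow>
     (\<forall>i j. \<alpha> i j \<ge> 0) \<and> (\<forall>i. \<alpha> i i = 0) \<and> (\<forall>i. (\<Sum>j\<in>UNIV. \<alpha> i j) = 1) \<and>
     (\<forall>i j. (i, j) \<in> {(a, b). \<alpha> a b > 0}\<^sup>*)"

definition P4_demand :: "('n \<Rightarrow> real) \<Rightarrow> (real \<Rightarrow> real) \<Rightarrow> ('n \<Rightarrow> real) \<Rightarrow> 'n \<Rightarrow> real" where
  "P4_demand \<theta> F p i = \<theta> i * (1 - F (p i))"

definition P4_feasible ::
  "('n::finite \<Rightarrow> real) \<Rightarrow> ('n \<Rightarrow> 'n \<Rightarrow> real) \<Rightarrow> real \<Rightarrow> (real \<Rightarrow> real) \<Rightarrow> 'n decision \<Rightarrow> bool" where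
  "P4_feasible \<theta> \<alpha> \<beta> F v \<longleftrightarrow>
     (case v of (p, \<delta>, x, y, z, r) \<Rightarrow>
       (let d = P4_demand \<theta> F p in
        (\<forall>i. x i = \<beta> * ((\<Sum>j\<in>UNIV. \<alpha> j i * min (x j) (d j)) + (\<Sum>j\<in>UNIV. y j i)) + \<delta> i) \<and>
        (\<forall>i. (\<Sum>j\<in>UNIV. y i j) = max (x i - d i) 0) \<and>
        (\<forall>i. z i = (\<Sum>j\<in>UNIV. \<alpha> j i * max (d j - x j) 0) + (\<Sum>j\<in>UNIV. r j i)) \<and>
        (\<forall>i. (\<Sum>j\<in>UNIV. r i j) = z i - max (d i - x i) 0) \<and>
        (\<forall>i. p i \<ge> 0 \<and> \<delta> i \<ge> 0 \<and> x i \<ge> 0 \<and> z i \<ge> 0 \<and> d i \<ge> 0) \<and>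
        (\<forall>i j. y i j \<ge> 0 \<and> r i j \<ge> 0)))"

definition P4_objective ::
  "('n::finite \<Rightarrow> real) \<Rightarrow> real \<Rightarrow> real \<Rightarrow> (real \<Rightarrow> real) \<Rightarrow> 'n decision \<Rightarrow> real" where
  "P4_objective \<theta> \<omega> s F v =
     (case v of (p, \<delta>, x, y, z, r) \<Rightarrow>
        (\<Sum>i\<in>UNIV. p i * \<theta> i * (1 - F (p i))) - \<omega> * (\<Sum>i\<in>UNIV. \<delta> i) - s * (\<Sum>i\<in>UNIV. z i))"

text \<open>Optimal value of (P4) (mixed autonomy) and of (P4) with z = 0 (human only).\<close>
definition P4_value ::
  "('n::finite \<Rightarrow> real) \<Rightarrow> ('n \<Rightarrow> 'n \<Rightarrow> real) \<Rightarrow> real \<Rightarrow> real \<Rightarrow> real \<Rightarrow> (real \<Rightarrow> real) \<Rightarrow> real" where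
  "P4_value \<theta> \<alpha> \<beta> \<omega> s F =
     Sup (P4_objective \<theta> \<omega> s F ` {v. P4_feasible \<theta> \<alpha> \<beta> F v})"

definition P4_human_value ::
  "('n::finite \<Rightarrow> real) \<Rightarrow> ('n \<Rightarrow> 'n \<Rightarrow> real) \<Rightarrow> real \<Rightarrow> real \<Rightarrow> real \<Rightarrow> (real \<Rightarrow> real) \<Rightarrow> real" where
  "P4_human_value \<theta> \<alpha> \<beta> \<omega> s F =
     Sup (P4_objective \<theta> \<omega> s F `
          {v. P4_feasible \<theta> \<alpha> \<beta> F v \<and> (\<forall>i. fst (snd (snd (snd (snd v)))) i = 0)})"

end

theory Submission
  imports Defs
begin

text \<open>Every human-only decision is feasible for the mixed-autonomy problem, so the second
  supremum is taken over a subset of the first. The comparison of suprema is legitimate because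
  the human-only set is nonempty (price every location at max pbar 0: demand vanishes and the
  all-zero fleet is feasible) and the mixed-autonomy objective is bounded above (the revenue
  q (1 - F q) of a single location never exceeds max pbar 0, and the costs are nonnegative).\<close>

lemma continuous_cdf_support_bounds:
  assumes "continuous_cdf_support F pbar"
  shows "0 \<le> F t" and "F t \<le> 1"
proof -
  have "mono F" and "F (min t 0) = 0" and "F (max t pbar) = 1"
    using assms unfolding continuous_cdf_support_def by auto
  then show "0 \<le> F t" and "F t \<le> 1"
    by (metis min.cobounded1 monoD, metis max.cobounded1 monoD)
qed

lemma continuous_cdf_support_revenue_le:
  assumes "continuous_cdf_support F pbar" and "0 \<le> q"
  shows "q * (1 - F q) \<le> max pbar 0"
proof (cases "pbar \<le> q")
  case True
  then have "F q = 1" using assms(1) unfolding continuous_cdf_support_def by auto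
  then show ?thesis by simp
next
  case False
  have "q * (1 - F q) \<le> q"
    using assms continuous_cdf_support_bounds(1)[OF assms(1), of q]
    by (simp add: mult_left_le)
  with False show ?thesis by simp
qed

lemma P4_objective_le:
  assumes "continuous_cdf_support F pbar" and "\<forall>i. \<theta> i \<ge> 0"
    and "\<omega> \<ge> 0" and "s \<ge> 0" and "P4_feasible \<theta> \<alpha> \<beta> F v"
  shows "P4_objective \<theta> \<omega> s F v \<le> (\<Sum>i\<in>UNIV. \<theta> i * max pbar 0)"
proof -
  obtain p \<delta> x y z r where v: "v = (p, \<delta>, x, y, z, r)" by (metis prod_cases6)
  have nonneg: "p i \<ge> 0" "\<delta> i \<ge> 0" "z i \<ge> 0" for i
    using assms(5) unfolding v P4_feasible_def Let_def prod.case by blast+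
  have revenue: "(\<Sum>i\<in>UNIV. p i * \<theta> i * (1 - F (p i))) \<le> (\<Sum>i\<in>UNIV. \<theta> i * max pbar 0)"
  proof (rule sum_mono)
    fix i
    have "\<theta> i * (p i * (1 - F (p i))) \<le> \<theta> i * max pbar 0"
      using assms(2) continuous_cdf_support_revenue_le[OF assms(1) nonneg(1)]
      by (intro mult_left_mono) auto
    then show "p i * \<theta> i * (1 - F (p i)) \<le> \<theta> i * max pbar 0"
      by (simp add: ac_simps)
  qed
  have "\<omega> * (\<Sum>i\<in>UNIV. \<delta> i) \<ge> 0" and "s * (\<Sum>i\<in>UNIV. z i) \<ge> 0"
    using assms(3,4) nonneg by (simp_all add: sum_nonneg)
  with revenue show ?thesis unfolding v P4_objective_def by simp
qed

lemma P4_feasible_idle_fleet: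
  assumes "continuous_cdf_support F pbar"
  shows "P4_feasible \<theta> \<alpha> \<beta> F ((\<lambda>_. max pbar 0), (\<lambda>_. 0), (\<lambda>_. 0), (\<lambda>_ _. 0), (\<lambda>_. 0), (\<lambda>_ _. 0))"
proof -
  have "F (max pbar 0) = 1" using assms unfolding continuous_cdf_support_def by auto
  then have "P4_demand \<theta> F (\<lambda>_. max pbar 0) = (\<lambda>_. 0)" by (auto simp: P4_demand_def)
  then show ?thesis unfolding P4_feasible_def Let_def prod.case by simp
qed

theorem corollary1:
  fixes \<theta> :: "'n::finite \<Rightarrow> real" and \<alpha> :: "'n \<Rightarrow> 'n \<Rightarrow> real"
    and \<beta> \<omega> s pbar :: real and F :: "real \<Rightarrow> real"
  assumes "\<forall>i. \<theta> i > 0"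
    and "routing_matrix \<alpha>"
    and "0 < \<beta>" and "\<beta> < 1"
    and "\<omega> > 0" and "s \<ge> 0"
    and "continuous_cdf_support F pbar"
  shows "P4_value \<theta> \<alpha> \<beta> \<omega> s F \<ge> P4_human_value \<theta> \<alpha> \<beta> \<omega> s F"
proof -
  let ?obj = "P4_objective \<theta> \<omega> s F"
  let ?mixed = "{v. P4_feasible \<theta> \<alpha> \<beta> F v}"
  let ?human = "{v. P4_feasible \<theta> \<alpha> \<beta> F v \<and> (\<forall>i. fst (snd (snd (snd (snd v)))) i = 0)}"
  have "?obj ` ?human \<noteq> {}"
    using P4_feasible_idle_fleet[OF assms(7)] by fastforce
  moreover have "bdd_above (?obj ` ?mixed)"
  proof (rule bdd_aboveI2)
    fix v assume "v \<in> ?mixed"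
    then show "?obj v \<le> (\<Sum>i\<in>UNIV. \<theta> i * max pbar 0)"
      using assms(1,5,6) by (intro P4_objective_le[OF assms(7)]) (auto simp: less_imp_le)
  qed
  moreover have "?obj ` ?human \<subseteq> ?obj ` ?mixed" by auto
  ultimately show ?thesis
    unfolding P4_value_def P4_human_value_def by (rule cSup_subset_mono)
qed

end
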